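(* Let $G=(V\cup\{O\},E)$ be a connected, unweighted, undirected graph, where $V$ is a set of $n$ terminals and $O\notin V$ is the depot, and let $k\in[1,n]$ be an integer tour capacity. Let $\mathrm{OPT}$ be an optimal solution to the graphic CVRP on this instance, let $T=z_1z_2\dots z_p$ be a tour in $\mathrm{OPT}$, let $U\subseteq V$ be the (nonempty) set of terminals whose demands are covered by $T$, and let $D=\sum_{v\in U}\mathrm{dist}(v)$. Then \[ \mathrm{cost}(T)\geq \frac{2D}{|U|}+\frac{|U|}{2}-\frac{1}{2|U|}. \]
   Context: For $v\in V$, $\mathrm{dist}(v)$ is the number of edges on a shortest $v$-to-$O$ path in $G$. A tour is a walk $z_1z_2\dots z_p$ in $G$ with $z_1=z_p=O$ and $(z_i,z_{i+1})\in E$ for all $i\in[1,p-1]$; its cost $\mathrm{cost}(T)$ is $p-1$. In the graphic CVRP, each terminal has unit demand; a feasible solution is a set of tours together with an assignment of each terminal to exactly one tour that visits it (that tour covers its demand), such that each tour covers at most $k$ terminals. The cost of a solution is the total cost of its tours; an optimal solution is a feasible solution of minimum cost. *)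

theory Defs
  imports Complex_Main
begin

definition graph_ok :: "'a set \<Rightarrow> ('a \<times> 'a) set \<Rightarrow> bool" where
  "graph_ok W E \<longleftrightarrow> finite W \<and> E \<subseteq> W \<times> W \<and> sym E \<and> irrefl E"

definition connected_graph :: "'a set \<Rightarrow> ('a \<times> 'a) set \<Rightarrow> bool" where
  "connected_graph W E \<longleftrightarrow> (\<forall>u\<in>W. \<forall>v\<in>W. (u, v) \<in> E\<^sup>*)"

definition is_walk :: "('a \<times> 'a) set \<Rightarrow> 'a list \<Rightarrow> bool" where
  "is_walk E zs \<longleftrightarrow> zs \<noteq> [] \<and> (\<forall>i. Suc i < length zs \<longrightarrow> (zs ! i, zs ! Suc i) \<in> E)"

definition dist :: "('a \<times> 'a) set \<Rightarrow> 'a \<Rightarrow> 'a \<Rightarrow> nat" where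
  "dist E dep v = (LEAST m. \<exists>zs. is_walk E zs \<and> hd zs = v \<and> last zs = dep \<and> length zs = Suc m)"

definition is_tour :: "('a \<times> 'a) set \<Rightarrow> 'a \<Rightarrow> 'a list \<Rightarrow> bool" where
  "is_tour E dep zs \<longleftrightarrow> is_walk E zs \<and> hd zs = dep \<and> last zs = dep"

definition tour_cost :: "'a list \<Rightarrow> nat" where
  "tour_cost zs = length zs - 1"

(* A feasible CVRP solution: a set S of tours together with an assignment
   \<sigma> of each terminal to one tour of S that visits it; each tour covers at most k terminals. *)
definition feasible_sol ::
  "('a \<times> 'a) set \<Rightarrow> 'a \<Rightarrow> 'a set \<Rightarrow> nat \<Rightarrow> 'a list set \<Rightarrow> ('a \<Rightarrow> 'a list) \<Rightarrow> bool" where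
  "feasible_sol E dep V k S \<sigma> \<longleftrightarrow>
     finite S \<and> (\<forall>T\<in>S. is_tour E dep T) \<and>
     (\<forall>v\<in>V. \<sigma> v \<in> S \<and> v \<in> set (\<sigma> v)) \<and>
     (\<forall>T\<in>S. card {v\<in>V. \<sigma> v = T} \<le> k)"

definition sol_cost :: "'a list set \<Rightarrow> nat" where
  "sol_cost S = (\<Sum>T\<in>S. tour_cost T)"

definition optimal_sol ::
  "('a \<times> 'a) set \<Rightarrow> 'a \<Rightarrow> 'a set \<Rightarrow> nat \<Rightarrow> 'a list set \<Rightarrow> ('a \<Rightarrow> 'a list) \<Rightarrow> bool" where
  "optimal_sol E dep V k S \<sigma> \<longleftrightarrow> feasible_sol E dep V k S \<sigma> \<and>
     (\<forall>S' \<sigma>'. feasible_sol E dep V k S' \<sigma>' \<longrightarrow> sol_cost S \<le> sol_cost S')"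

end

theory Submission
  imports Defs
begin

(* A terminal visited at position t of a tour with L edges is within distance min t (L - t)
   of the depot, by following the tour forward or backward. The terminals of U occupy |U|
   distinct positions in {0..L}, and the sum of min t (L - t) over m distinct positions is at
   most (2mL - m^2 + 1)/4; dividing by 2m gives the bound. *)

lemma sum_min_dist_to_ends_le:
  fixes P :: "nat set"
  assumes "finite P" "P \<subseteq> {..L}"
  shows "4 * (\<Sum>t\<in>P. int (min t (L - t))) \<le> 2 * int (card P) * int L - int (card P)^2 + 1"
  using assms
proof (induction "card P" arbitrary: P rule: less_induct)
  case less
  show ?case
  proof (cases "card P \<le> 1")
    case True
    then consider "P = {}" | t where "P = {t}"
      using less.prems(1) by (metis card_0_eq card_1_singletonE le_Suc_eq le_zero_eq One_nat_def)
    then show ?thesis by cases simp_all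
  next
    case False
    define a where "a = Min P"
    define b where "b = Max P"
    define P' where "P' = P - {a, b}"
    have "P \<noteq> {}" using False by auto
    then have a: "a \<in> P" and b: "b \<in> P" and "P \<subseteq> {a..b}"
      using less.prems(1) by (auto simp: a_def b_def)
    then have "card P \<le> b + 1 - a"
      using card_mono[of "{a..b}" P] by simp
    moreover have "a < b"
      using False \<open>card P \<le> b + 1 - a\<close> by linarith
    moreover have "b \<le> L" using b less.prems(2) by auto
    \<comment> \<open>the extreme positions are at least card P - 1 apart\<close>
    ultimately have ends: "int (min a (L - a)) + int (min b (L - b)) \<le> int L - int (card P) + 1"
      by linarith
    have card_P': "int (card P') = int (card P) - 2"
      using a b \<open>a < b\<close> False less.prems(1) by (simp add: P'_def card_Diff_subset)
    have "P = insert a (insert b P')" "a \<notin> insert b P'" "b \<notin> P'" "finite P'"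
      using a b \<open>a < b\<close> less.prems(1) by (auto simp: P'_def)
    then have split: "(\<Sum>t\<in>P. int (min t (L - t)))
        = int (min a (L - a)) + int (min b (L - b)) + (\<Sum>t\<in>P'. int (min t (L - t)))"
      by simp
    have "4 * (\<Sum>t\<in>P'. int (min t (L - t))) \<le> 2 * int (card P') * int L - int (card P')^2 + 1"
      using less.hyps[of P'] card_P' less.prems by (auto simp: P'_def)
    then show ?thesis
      using ends split card_P' by (simp add: power2_eq_square algebra_simps)
  qed
qed

lemma dist_le_walk:
  assumes "is_walk E zs" "hd zs = v" "last zs = dep"
  shows "dist E dep v \<le> length zs - 1"
  unfolding dist_def
  by (rule Least_le) (use assms in \<open>auto simp: is_walk_def\<close>)

lemma is_walk_drop:
  "is_walk E zs \<Longrightarrow> i < length zs \<Longrightarrow> is_walk E (drop i zs)"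
  by (auto simp: is_walk_def)

lemma is_walk_rev:
  assumes "sym E" "is_walk E zs"
  shows "is_walk E (rev zs)"
  unfolding is_walk_def
proof (intro conjI allI impI)
  show "rev zs \<noteq> []" using assms(2) by (simp add: is_walk_def)
  fix i
  assume i: "Suc i < length (rev zs)"
  then have "(zs ! (length zs - Suc (Suc i)), zs ! Suc (length zs - Suc (Suc i))) \<in> E"
    using assms(2) by (auto simp: is_walk_def)
  then show "(rev zs ! i, rev zs ! Suc i) \<in> E"
    using i assms(1) by (auto simp: rev_nth Suc_diff_Suc intro: symD)
qed

lemma is_walk_take:
  "is_walk E zs \<Longrightarrow> 0 < i \<Longrightarrow> is_walk E (take i zs)"
  by (auto simp: is_walk_def)

lemma dist_le_tour_position:
  assumes "sym E" "is_tour E dep T" "i < length T"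
  shows "dist E dep (T ! i) \<le> min i (tour_cost T - i)"
proof -
  have walk: "is_walk E T" and "hd T = dep" "last T = dep"
    using assms(2) by (auto simp: is_tour_def)
  have "dist E dep (T ! i) \<le> length (drop i T) - 1"
    using walk assms(3) \<open>last T = dep\<close>
    by (intro dist_le_walk is_walk_drop) (auto simp: hd_drop_conv_nth)
  moreover have "dist E dep (T ! i) \<le> length (rev (take (Suc i) T)) - 1"
    using walk assms \<open>hd T = dep\<close>
    by (intro dist_le_walk is_walk_rev is_walk_take)
       (auto simp: hd_rev last_rev take_Suc_conv_app_nth hd_conv_nth)
  ultimately show ?thesis
    using assms(3) by (simp add: tour_cost_def)
qed

lemma sum_dist_visited_le:
  assumes "sym E" "is_tour E dep T" "finite U" "U \<subseteq> set T"
  shows "4 * int (\<Sum>v\<in>U. dist E dep v)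
           \<le> 2 * int (card U) * int (tour_cost T) - int (card U)^2 + 1"
proof -
  have "\<forall>v\<in>U. \<exists>i. i < length T \<and> T ! i = v"
    using assms(4) by (auto simp: in_set_conv_nth)
  then obtain pos where pos: "\<And>v. v \<in> U \<Longrightarrow> pos v < length T \<and> T ! pos v = v"
    by metis
  have inj: "inj_on pos U"
    by (rule inj_onI) (metis pos)
  have "dist E dep v \<le> min (pos v) (tour_cost T - pos v)" if "v \<in> U" for v
    using dist_le_tour_position[OF assms(1,2), of "pos v"] pos[OF that] by simp
  then have "(\<Sum>v\<in>U. dist E dep v) \<le> (\<Sum>v\<in>U. min (pos v) (tour_cost T - pos v))"
    by (rule sum_mono)
  also have "\<dots> = (\<Sum>t\<in>pos ` U. min t (tour_cost T - t))"
    by (simp add: sum.reindex[OF inj])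
  finally have "4 * int (\<Sum>v\<in>U. dist E dep v) \<le> 4 * (\<Sum>t\<in>pos ` U. int (min t (tour_cost T - t)))"
    by (simp flip: of_nat_sum)
  also have "\<dots> \<le> 2 * int (card (pos ` U)) * int (tour_cost T) - int (card (pos ` U))^2 + 1"
  proof (rule sum_min_dist_to_ends_le)
    show "pos ` U \<subseteq> {..tour_cost T}"
      using pos by (fastforce simp: tour_cost_def)
  qed (use assms(3) in simp)
  finally show ?thesis
    by (simp add: card_image[OF inj])
qed

theorem mainTheorem3:
  fixes V :: "'a set" and dep :: 'a and E :: "('a \<times> 'a) set" and n k :: nat
    and S :: "'a list set" and \<sigma> :: "'a \<Rightarrow> 'a list" and T :: "'a list"
  assumes "graph_ok (insert dep V) E"
    and "connected_graph (insert dep V) E"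
    and "dep \<notin> V"
    and "card V = n"
    and "1 \<le> k" and "k \<le> n"
    and "optimal_sol E dep V k S \<sigma>"
    and "T \<in> S"
    and "U = {v\<in>V. \<sigma> v = T}"
    and "U \<noteq> {}"
    and "D = (\<Sum>v\<in>U. dist E dep v)"
  shows "real (tour_cost T) \<ge> 2 * real D / real (card U) + real (card U) / 2 - 1 / (2 * real (card U))"
proof -
  have "sym E" "finite U"
    using assms(1,9) by (auto simp: graph_ok_def)
  have "feasible_sol E dep V k S \<sigma>"
    using assms(7) by (simp add: optimal_sol_def)
  then have "is_tour E dep T" "U \<subseteq> set T"
    using assms(8,9) by (auto simp: feasible_sol_def)
  then have "4 * int D \<le> 2 * int (card U) * int (tour_cost T) - int (card U)^2 + 1"
    unfolding assms(11) using \<open>sym E\<close> \<open>finite U\<close> by (intro sum_dist_visited_le)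
  then have "real_of_int (4 * int D)
      \<le> real_of_int (2 * int (card U) * int (tour_cost T) - int (card U)^2 + 1)"
    by (simp only: of_int_le_iff)
  then have bound: "4 * real D + real (card U)^2 - 1 \<le> 2 * real (card U) * real (tour_cost T)"
    by simp
  have "real (card U) > 0"
    using \<open>finite U\<close> assms(10) by (simp add: card_gt_0_iff)
  then have "2 * real D / real (card U) + real (card U) / 2 - 1 / (2 * real (card U))
      = (4 * real D + real (card U)^2 - 1) / (2 * real (card U))"
    by (simp add: field_simps power2_eq_square)
  also have "\<dots> \<le> real (tour_cost T)"
    using bound \<open>real (card U) > 0\<close> by (simp add: divide_le_eq algebra_simps)
  finally show ?thesis .
qed

end
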